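(* Let $K$ and $K'$ be two non-degenerate CMIs, with $\mathrm{can}(\mathrm{pur}(K))=(C,\langle\mathbb I_K,\mathbb I_K,P_i,1\le i\le t\rangle)$ and $\mathrm{can}(\mathrm{pur}(K'))=(C',\langle\mathbb I_{K'},\mathbb I_{K'},P'_j,1\le j\le s\rangle)$. Let $K''=R_K^{K'}$ and $\mathrm{can}(\mathrm{pur}(K''))=(C'',\langle\mathbb I_{K''},\mathbb I_{K''},P''_j,1\le j\le r\rangle)$. Then: (i) $C''\cap\mathbb I_K=\emptyset$ and $P''_j\cap\mathbb I_K=\emptyset$ for $1\le j\le r$; (ii) if $K$ implies $K'$, then $\mathbb I_{K''}=\emptyset$ and $\mathrm{can}(\mathrm{pur}(K''))=(C'',\langle P''_j,1\le j\le r\rangle)$; (iii) if $K''\ne(\cdot,\langle\ \rangle)$, then $r\ge2$.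
   Context: Setting: $X_1,\dots,X_n$ jointly distributed discrete random variables with $H(X_i)<\infty$; distribution unspecified. $X_\alpha=(X_i,i\in\alpha)$, $X_\emptyset$ constant. A CMI is $K=(C,\langle Q_1,\dots,Q_k\rangle)$, $k\ge0$, $C\subseteq\{1,\dots,n\}$, $\langle\cdot\rangle$ an unordered multiset of subsets; valid (for a given distribution) if $\sum_iH(X_{Q_i}|X_C)-H(X_{Q_1},\dots,X_{Q_k}|X_C)=0$. Empty members may be deleted. Degenerate = valid for every distribution, written $(\cdot,\langle\ \rangle)$. "$K$ implies $K'$": for every joint distribution, if $K$ is valid then $K'$ is valid. $\mathrm{pur}(K)=(C,\langle Q_i\setminus C:Q_i\setminus C\ne\emptyset\rangle)$. For pure $K$: $\mathbb I_K$ = indices lying in at least two members of the collection if $k\ge2$, else $\emptyset$; $P_1,\dots,P_t$ the nonempty sets among $Q_i\setminus\mathbb I_K$; $\mathrm{can}(K)=(\cdot,\langle\ \rangle)$ if $k\le1$, $(C,\langle\mathbb I_K,\mathbb I_K\rangle)$ if $k\ge2,\mathbb I_K\ne\emptyset,t\le1$, $(C,\langle P_1..P_t\rangle)$ if $k\ge2,\mathbb I_K=\emptyset$, $(C,\langle\mathbb I_K,\mathbb I_K,P_1..P_t\rangle)$ if $k\ge2,\mathbb I_K\ne\emptyset,t\ge2$. For general $K$, $\mathbb I_K$ is the repeated-index set of $\mathrm{pur}(K)$; general-form notation omits copies of $\mathbb I_K$ when empty and uses $t=0$ for $(C,\langle\mathbb I_K,\mathbb I_K\rangle)$ (so $t\ne1$).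 $R_K^{K'}$: with $D=\mathbb I_{K'}\setminus\mathbb I_K$ and $T_1,\dots,T_u$ the nonempty sets among $P'_j\setminus\mathbb I_K$: $R_K^{K'}=(\cdot,\langle\ \rangle)$ if $D=\emptyset,u\le1$; $(C'\setminus\mathbb I_K,\langle T_1..T_u\rangle)$ if $D=\emptyset,u\ge2$; $(C'\setminus\mathbb I_K,\langle D,D\rangle)$ if $D\ne\emptyset,u\le1$; $(C'\setminus\mathbb I_K,\langle D,D,T_1..T_u\rangle)$ if $D\ne\emptyset,u\ge2$. *)

theory Defs
  imports "HOL-Probability.Probability_Mass_Function" "HOL-Library.Multiset"
begin

text \<open>A joint distribution of the discrete random variables X_1,...,X_n is a pmf on
  outcome vectors nat => nat (coordinate i is the value of X_i; any countable alphabet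
  can be relabelled into nat without changing entropies).  Coordinates outside 1..n
  are irrelevant.\<close>

type_synonym outcome = "nat \<Rightarrow> nat"

definition ent_term :: "'b pmf \<Rightarrow> 'b \<Rightarrow> real" where
  "ent_term q x = - pmf q x * log 2 (pmf q x)"

definition entropy_pmf :: "'b pmf \<Rightarrow> real" where
  "entropy_pmf q = (\<Sum>\<^sub>\<infinity>x\<in>set_pmf q. ent_term q x)"

definition finite_entropy :: "'b pmf \<Rightarrow> bool" where
  "finite_entropy q \<longleftrightarrow> (ent_term q) summable_on set_pmf q"

text \<open>Distribution of X_alpha = (X_i, i in alpha); X_{} is constant.\<close>
definition marg :: "outcome pmf \<Rightarrow> nat set \<Rightarrow> outcome pmf" where
  "marg p \<alpha> = map_pmf (\<lambda>\<omega>. restrict \<omega> \<alpha>) p"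

definition H :: "outcome pmf \<Rightarrow> nat set \<Rightarrow> real" where
  "H p \<alpha> = entropy_pmf (marg p \<alpha>)"

definition condH :: "outcome pmf \<Rightarrow> nat set \<Rightarrow> nat set \<Rightarrow> real" where
  "condH p A C = H p (A \<union> C) - H p C"

definition admissible :: "nat \<Rightarrow> outcome pmf \<Rightarrow> bool" where
  "admissible n p \<longleftrightarrow> (\<forall>i\<in>{1..n}. finite_entropy (marg p {i}))"

text \<open>A CMI (C, <Q_1,...,Q_k>) : conditioning set and multiset of subsets.\<close>
type_synonym cmi = "nat set \<times> nat set multiset"

definition wf_cmi :: "nat \<Rightarrow> cmi \<Rightarrow> bool" where
  "wf_cmi n K \<longleftrightarrow> fst K \<subseteq> {1..n} \<and> (\<forall>Q\<in>#snd K. Q \<subseteq> {1..n})"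

definition valid :: "outcome pmf \<Rightarrow> cmi \<Rightarrow> bool" where
  "valid p K \<longleftrightarrow>
     (\<Sum>Q\<in>#snd K. condH p Q (fst K)) - condH p (\<Union>(set_mset (snd K))) (fst K) = 0"

definition degenerate :: "nat \<Rightarrow> cmi \<Rightarrow> bool" where
  "degenerate n K \<longleftrightarrow> (\<forall>p. admissible n p \<longrightarrow> valid p K)"

definition cmi_implies :: "nat \<Rightarrow> cmi \<Rightarrow> cmi \<Rightarrow> bool" where
  "cmi_implies n K K' \<longleftrightarrow> (\<forall>p. admissible n p \<longrightarrow> valid p K \<longrightarrow> valid p K')"

text \<open>The syntactic representative of the degenerate CMI (.,< >).\<close>
definition degCMI :: cmi where
  "degCMI = ({}, {#})"

definition pur :: "cmi \<Rightarrow> cmi" where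
  "pur K = (fst K, filter_mset (\<lambda>Q. Q \<noteq> {}) (image_mset (\<lambda>Q. Q - fst K) (snd K)))"

definition IIcoll :: "nat set multiset \<Rightarrow> nat set" where
  "IIcoll M = (if 2 \<le> size M then {i. 2 \<le> size (filter_mset (\<lambda>Q. i \<in> Q) M)} else {})"

definition II :: "cmi \<Rightarrow> nat set" where
  "II K = IIcoll (snd (pur K))"

definition can :: "cmi \<Rightarrow> cmi" where
  "can K = (let M = snd K; I = IIcoll M;
               Ps = filter_mset (\<lambda>P. P \<noteq> {}) (image_mset (\<lambda>Q. Q - I) M)
            in if size M \<le> 1 then degCMI
               else if I = {} then (fst K, Ps)
               else if size Ps \<le> 1 then (fst K, {#I, I#})
               else (fst K, {#I, I#} + Ps))"

text \<open>The sets P_1..P_t in the general-form notation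
  can(pur(K)) = (C, <I_K, I_K, P_1, ..., P_t>): the members of can(pur(K)) other than
  the two copies of I_K (none when I_K is empty).\<close>
definition genP :: "cmi \<Rightarrow> nat set multiset" where
  "genP K = (let M = snd (can (pur K)) in if II K = {} then M else M - {#II K, II K#})"

definition R :: "cmi \<Rightarrow> cmi \<Rightarrow> cmi" where
  "R K K' = (let I = II K; D = II K' - I; C' = fst (can (pur K'));
                Ts = filter_mset (\<lambda>T. T \<noteq> {}) (image_mset (\<lambda>P. P - I) (genP K'))
             in if D = {} \<and> size Ts \<le> 1 then degCMI
                else if D = {} then (C' - I, Ts)
                else if size Ts \<le> 1 then (C' - I, {#D, D#})
                else (C' - I, {#D, D#} + Ts))"

end

theory Submission imports Defs begin

text \<open>Let X_i be a fair bit and all other coordinates constant.  Then H(X_alpha | X_C) is 1 if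
  i is in alpha but not in C and 0 otherwise, so a CMI K is valid for this distribution exactly
  when i is not a repeated index of pur(K).  Hence if K implies K', then I_K' is contained in I_K,
  i.e. D = I_K' - I_K is empty, and R_K^K' is built only from the sets P'_j - I_K, in which every
  index occurs at most once.  So R_K^K' has no repeated indices, and being non-degenerate it has
  at least two nonempty members.  Disjointness from I_K holds by construction.\<close>

definition occurrences :: "nat \<Rightarrow> nat set multiset \<Rightarrow> nat" where
  "occurrences j M = size (filter_mset (\<lambda>Q. j \<in> Q) M)"

lemma occurrences_eq_0_iff: "occurrences j M = 0 \<longleftrightarrow> j \<notin> \<Union>(set_mset M)"
  unfolding occurrences_def by (induction M) auto

lemma occurrences_le_size: "occurrences j M \<le> size M"
  unfolding occurrences_def by (rule size_filter_mset_lesseq)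

lemma occurrences_mono: "M \<subseteq># N \<Longrightarrow> occurrences j M \<le> occurrences j N"
  unfolding occurrences_def by (intro size_mset_mono multiset_filter_mono)

lemma occurrences_Diff_members_le:
  "occurrences j (filter_mset (\<lambda>P. P \<noteq> {}) (image_mset (\<lambda>Q. Q - A) M)) \<le> occurrences j M"
  unfolding occurrences_def by (induction M) auto

lemma mem_IIcoll_iff: "j \<in> IIcoll M \<longleftrightarrow> 2 \<le> occurrences j M"
  using occurrences_le_size[of j M] unfolding IIcoll_def occurrences_def[symmetric] by auto

lemma IIcoll_eq_emptyI: "(\<And>j. occurrences j M \<le> 1) \<Longrightarrow> IIcoll M = {}"
  by (metis mem_IIcoll_iff equals0I not_less_eq_eq numeral_2_eq_2 One_nat_def)

lemma occurrences_Diff_IIcoll_le_1: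
  "occurrences j (filter_mset (\<lambda>P. P \<noteq> {}) (image_mset (\<lambda>Q. Q - IIcoll M) M)) \<le> 1"
proof (cases "j \<in> IIcoll M")
  case True
  then have "occurrences j (filter_mset (\<lambda>P. P \<noteq> {}) (image_mset (\<lambda>Q. Q - IIcoll M) M)) = 0"
    by (auto simp: occurrences_eq_0_iff)
  then show ?thesis by simp
next
  case False
  with occurrences_Diff_members_le[of j "IIcoll M" M] show ?thesis
    unfolding mem_IIcoll_iff by simp
qed

lemma condH_Diff_cond: "condH p (A - C) C = condH p A C"
  unfolding condH_def by simp

lemma condH_empty: "condH p {} C = 0"
  unfolding condH_def by simp

lemma sum_condH_purified:
  "(\<Sum>Q\<in>#filter_mset (\<lambda>Q. Q \<noteq> {}) (image_mset (\<lambda>Q. Q - C) M). condH p Q C)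
     = (\<Sum>Q\<in>#M. condH p Q C)"
proof (induction M)
  case (add A M)
  have "condH p A C = 0" if "A - C = {}"
    using condH_Diff_cond[of p A C] that by (simp add: condH_empty)
  with add show ?case by (simp add: condH_Diff_cond)
qed simp

lemma valid_pur_iff: "valid p (pur K) \<longleftrightarrow> valid p K"
proof -
  have "\<Union>(set_mset (snd (pur K))) \<union> fst K = \<Union>(set_mset (snd K)) \<union> fst K"
    unfolding pur_def by auto
  then have "condH p (\<Union>(set_mset (snd (pur K)))) (fst K) = condH p (\<Union>(set_mset (snd K))) (fst K)"
    unfolding condH_def by simp
  then show ?thesis
    unfolding valid_def using sum_condH_purified[where C = "fst K" and M = "snd K"] by (simp add: pur_def)
qed

lemma valid_if_size_le_1: "size (snd K) \<le> 1 \<Longrightarrow> valid p K"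
  by (cases "snd K") (auto simp: valid_def condH_empty)

lemma degenerate_if_size_pur_le_1: "size (snd (pur K)) \<le> 1 \<Longrightarrow> degenerate n K"
  unfolding degenerate_def using valid_if_size_le_1 valid_pur_iff by blast

lemma entropy_pmf_of_set:
  assumes "finite T" "T \<noteq> {}"
  shows "entropy_pmf (pmf_of_set T) = log 2 (card T)"
proof -
  have card: "card T > 0" using assms by (simp add: card_gt_0_iff)
  have "entropy_pmf (pmf_of_set T) = (\<Sum>x\<in>T. - (1 / card T) * log 2 (1 / card T))"
    unfolding entropy_pmf_def ent_term_def using assms by (simp add: indicator_def)
  also have "\<dots> = log 2 (card T)" using card by (simp add: log_divide)
  finally show ?thesis .
qed

definition single_bit_pmf :: "nat \<Rightarrow> outcome pmf" where
  "single_bit_pmf i = pmf_of_set {(\<lambda>_. 0), (\<lambda>j. if j = i then 1 else 0)}"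

lemma H_single_bit_pmf: "H (single_bit_pmf i) \<alpha> = (if i \<in> \<alpha> then 1 else 0)"
proof (cases "i \<in> \<alpha>")
  case True
  let ?S = "{(\<lambda>_. 0::nat), (\<lambda>j. if j = i then 1 else 0)}"
  have inj: "inj_on (\<lambda>\<omega>. restrict \<omega> \<alpha>) ?S"
    using True by (auto simp: inj_on_def restrict_def fun_eq_iff split: if_splits)
  have "marg (single_bit_pmf i) \<alpha> = pmf_of_set ((\<lambda>\<omega>. restrict \<omega> \<alpha>) ` ?S)"
    unfolding marg_def single_bit_pmf_def by (rule map_pmf_of_set_inj[OF inj]) auto
  moreover have "card ((\<lambda>\<omega>. restrict \<omega> \<alpha>) ` ?S) = 2"
    using inj by (simp add: card_image fun_eq_iff)
  ultimately show ?thesis using True unfolding H_def by (simp add: entropy_pmf_of_set)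
next
  case False
  have "marg (single_bit_pmf i) \<alpha> = map_pmf (\<lambda>_. restrict (\<lambda>_. 0::nat) \<alpha>) (single_bit_pmf i)"
    unfolding marg_def single_bit_pmf_def
    by (rule map_pmf_cong) (use False in \<open>auto simp: restrict_def fun_eq_iff\<close>)
  also have "\<dots> = pmf_of_set {restrict (\<lambda>_. 0::nat) \<alpha>}"
    by (simp add: pmf_of_set_singleton)
  finally show ?thesis using False unfolding H_def by (simp add: entropy_pmf_of_set)
qed

lemma condH_single_bit_pmf:
  "condH (single_bit_pmf i) A C = (if i \<in> A \<and> i \<notin> C then 1 else 0)"
  unfolding condH_def H_single_bit_pmf by auto

lemma admissible_single_bit_pmf: "admissible n (single_bit_pmf i)"
  unfolding admissible_def finite_entropy_def marg_def single_bit_pmf_def by simp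

lemma sum_condH_single_bit_pmf:
  "(\<Sum>Q\<in>#M. condH (single_bit_pmf i) Q C) = (if i \<in> C then 0 else real (occurrences i M))"
  by (induction M) (auto simp: condH_single_bit_pmf occurrences_def)

lemma valid_single_bit_pmf_iff:
  "valid (single_bit_pmf i) K \<longleftrightarrow> i \<in> fst K \<or> occurrences i (snd K) \<le> 1"
  using occurrences_eq_0_iff[of i "snd K"]
  unfolding valid_def sum_condH_single_bit_pmf unfolding condH_single_bit_pmf by auto

lemma valid_single_bit_pmf_iff_notin_II: "valid (single_bit_pmf i) K \<longleftrightarrow> i \<notin> II K"
proof -
  have "occurrences i (snd (pur K)) = 0" if "i \<in> fst K"
    using that unfolding occurrences_eq_0_iff pur_def by auto
  then have "valid (single_bit_pmf i) (pur K) \<longleftrightarrow> occurrences i (snd (pur K)) \<le> 1"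
    unfolding valid_single_bit_pmf_iff by (auto simp: pur_def)
  then show ?thesis unfolding valid_pur_iff II_def mem_IIcoll_iff by auto
qed

lemma cmi_implies_II_subset: "cmi_implies n K K' \<Longrightarrow> II K' \<subseteq> II K"
  unfolding cmi_implies_def
  using admissible_single_bit_pmf valid_single_bit_pmf_iff_notin_II by blast

lemma fst_pur [simp]: "fst (pur K) = fst K"
  unfolding pur_def by simp

lemma fst_can_subset: "fst (can K) \<subseteq> fst K"
  unfolding can_def Let_def degCMI_def by auto

lemma genP_subseteq:
  "genP K \<subseteq># filter_mset (\<lambda>P. P \<noteq> {}) (image_mset (\<lambda>Q. Q - II K) (snd (pur K)))"
  unfolding genP_def can_def Let_def II_def[symmetric] degCMI_def by (simp split: if_split)

lemma members_genP_subset: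
  assumes "P \<in># genP K"
  shows "P \<subseteq> \<Union>(set_mset (snd K))"
proof -
  from mset_subset_eqD[OF genP_subseteq assms]
  obtain Q where "Q \<in># snd (pur K)" and "P = Q - II K" by auto
  then show ?thesis unfolding pur_def by auto
qed

lemma occurrences_genP_le_1: "occurrences j (genP K) \<le> 1"
  using occurrences_mono[OF genP_subseteq] occurrences_Diff_IIcoll_le_1
  unfolding II_def by (rule order_trans)

lemma occurrences_pur_le: "occurrences j (snd (pur K)) \<le> occurrences j (snd K)"
  unfolding pur_def by (simp add: occurrences_Diff_members_le)

lemma II_eq_emptyI: "(\<And>j. occurrences j (snd K) \<le> 1) \<Longrightarrow> II K = {}"
  unfolding II_def using occurrences_pur_le by (metis IIcoll_eq_emptyI order_trans)

lemma size_genP_ge_2: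
  assumes "II K = {}" and "\<not> degenerate n K"
  shows "2 \<le> size (genP K)"
proof -
  have "\<not> size (snd (pur K)) \<le> 1"
    using degenerate_if_size_pur_le_1 assms(2) by blast
  then have size: "2 \<le> size (snd (pur K))" by simp
  have "filter_mset (\<lambda>P. P \<noteq> {}) (snd (pur K)) = snd (pur K)"
    unfolding pur_def by (simp add: filter_mset_eq_conv)
  then have "snd (can (pur K)) = snd (pur K)"
    using size assms(1) unfolding can_def Let_def II_def by simp
  with size assms(1) show ?thesis unfolding genP_def by simp
qed

lemma R_disjoint_II:
  shows "fst (R K K') \<inter> II K = {}"
    and "Q \<in># snd (R K K') \<Longrightarrow> Q \<inter> II K = {}"
  unfolding R_def Let_def degCMI_def by (auto split: if_splits)

lemma II_R_eq_empty:
  assumes "II K' \<subseteq> II K"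
  shows "II (R K K') = {}"
proof (rule II_eq_emptyI)
  fix j
  let ?Ts = "filter_mset (\<lambda>T. T \<noteq> {}) (image_mset (\<lambda>P. P - II K) (genP K'))"
  have "snd (R K K') \<subseteq># ?Ts"
    using assms unfolding R_def Let_def degCMI_def by (simp split: if_split)
  then have "occurrences j (snd (R K K')) \<le> occurrences j ?Ts"
    by (rule occurrences_mono)
  also have "\<dots> \<le> occurrences j (genP K')"
    by (rule occurrences_Diff_members_le)
  also have "\<dots> \<le> 1"
    by (rule occurrences_genP_le_1)
  finally show "occurrences j (snd (R K K')) \<le> 1" .
qed

theorem mainTheorem16:
  fixes n :: nat and K K' K'' :: cmi
  assumes "wf_cmi n K" and "wf_cmi n K'"
    and "\<not> degenerate n K" and "\<not> degenerate n K'"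
    and "K'' = R K K'"
  shows "(fst (can (pur K'')) \<inter> II K = {} \<and> (\<forall>P\<in>#genP K''. P \<inter> II K = {}))
       \<and> (cmi_implies n K K' \<longrightarrow>
            II K'' = {} \<and> can (pur K'') = (fst (can (pur K'')), genP K''))
       \<and> (cmi_implies n K K' \<longrightarrow> \<not> degenerate n K'' \<longrightarrow> 2 \<le> size (genP K''))"
proof -
  have "fst (can (pur K'')) \<inter> II K = {}"
    using fst_can_subset[of "pur K''"] R_disjoint_II(1)[of K K'] assms(5) by auto
  moreover have "\<forall>P\<in>#genP K''. P \<inter> II K = {}"
    using members_genP_subset R_disjoint_II(2) assms(5) by blast
  moreover have "II K'' = {}" if "cmi_implies n K K'"
    using II_R_eq_empty[OF cmi_implies_II_subset[OF that]] assms(5) by simp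
  moreover have "can (pur K'') = (fst (can (pur K'')), genP K'')" if "II K'' = {}"
    using that unfolding genP_def by simp
  ultimately show ?thesis
    using size_genP_ge_2 by blast
qed

end
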